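(* Let $X_1,X_2$ be complex Banach spaces and $X:=X_1\times X_2$. Let $A:\mathcal{D}(A)\subset X_1\to X_1$ and $D:\mathcal{D}(D)\subset X_2\to X_2$ be closed operators, let $B:\mathcal{D}(B)\subset X_2\to X_1$ be relatively $D$-bounded and $C:\mathcal{D}(C)\subset X_1\to X_2$ be relatively $A$-bounded. Consider the operator matrix \[ \mathbb{A}=\begin{pmatrix} A & B\\ C & D\end{pmatrix}:\mathcal{D}(A)\times\mathcal{D}(D)\subset X\to X,\qquad \mathbb{A}(x_1,x_2)=(Ax_1+Bx_2,\;Cx_1+Dx_2), \] and assume that $\mathbb{A}$ is closed on $\mathcal{D}(A)\times\mathcal{D}(D)$. Then \[ \sigma(\mathbb{A})\subset \sigma(A)\cup\sigma(D)\cup\big\{\lambda\in\mathbb{C}\setminus(\sigma(A)\cup\sigma(D)) : \mathcal{R}_{21}(\lambda)\ge 1\big\}, \] where $\mathcal{R}_{21}(\lambda):=\|B(\lambda-D)^{-1}C(\lambda-A)^{-1}\|$ (operator norm on $X_1$).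
   Context: An operator $C:\mathcal{D}(C)\subset Y\to Z$ between Banach spaces is relatively $A$-bounded (for $A:\mathcal{D}(A)\subset Y\to Y$) if $\mathcal{D}(A)\subset\mathcal{D}(C)$ and there exist $\alpha,\beta\ge 0$ with $\|Cx\|\le\alpha\|x\|+\beta\|Ax\|$ for all $x\in\mathcal{D}(A)$. For a linear operator $T:\mathcal{D}(T)\subset Y\to Y$, the spectrum $\sigma(T)$ is the set of $\lambda\in\mathbb{C}$ such that $\lambda-T:\mathcal{D}(T)\to Y$ is not bijective with bounded inverse. *)

theory Defs
  imports "HOL-Analysis.Analysis"
begin

class complex_vector = real_vector +
  fixes scaleC :: "complex \<Rightarrow> 'a \<Rightarrow> 'a"  (infixr \<open>*\<^sub>C\<close> 75)
  assumes scaleC_add_right: "a *\<^sub>C (x + y) = a *\<^sub>C x + a *\<^sub>C y"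
    and scaleC_add_left: "(a + b) *\<^sub>C x = a *\<^sub>C x + b *\<^sub>C x"
    and scaleC_scaleC: "a *\<^sub>C (b *\<^sub>C x) = (a * b) *\<^sub>C x"
    and scaleC_one: "1 *\<^sub>C x = x"
    and scaleR_scaleC: "r *\<^sub>R x = complex_of_real r *\<^sub>C x"

class complex_normed_vector = complex_vector + real_normed_vector +
  assumes norm_scaleC: "norm (a *\<^sub>C x) = cmod a * norm x"

instantiation prod :: (complex_vector, complex_vector) complex_vector
begin
definition scaleC_prod_def: "a *\<^sub>C x = (a *\<^sub>C fst x, a *\<^sub>C snd x)"
instance
  by standard (auto simp: scaleC_prod_def scaleC_add_right scaleC_add_left
      scaleC_scaleC scaleC_one scaleR_scaleC prod_eq_iff)
end

definition complex_subspace :: "'a::complex_vector set \<Rightarrow> bool" where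
  "complex_subspace S \<longleftrightarrow> 0 \<in> S \<and> (\<forall>x\<in>S. \<forall>y\<in>S. x + y \<in> S) \<and> (\<forall>c. \<forall>x\<in>S. c *\<^sub>C x \<in> S)"

text \<open>A linear operator T with domain Dom (values of T outside Dom are irrelevant).\<close>
definition lin_op :: "'a::complex_vector set \<Rightarrow> ('a \<Rightarrow> 'b::complex_vector) \<Rightarrow> bool" where
  "lin_op Dom T \<longleftrightarrow> complex_subspace Dom \<and>
     (\<forall>x\<in>Dom. \<forall>y\<in>Dom. T (x + y) = T x + T y) \<and>
     (\<forall>c. \<forall>x\<in>Dom. T (c *\<^sub>C x) = c *\<^sub>C T x)"

definition closed_op :: "'a::{complex_vector,real_normed_vector} set \<Rightarrow> ('a \<Rightarrow> 'b::{complex_vector,real_normed_vector}) \<Rightarrow> bool" where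
  "closed_op Dom T \<longleftrightarrow> lin_op Dom T \<and> closed {(x, T x) | x. x \<in> Dom}"

definition rel_bounded ::
  "'a::real_normed_vector set \<Rightarrow> ('a \<Rightarrow> 'a) \<Rightarrow> 'a set \<Rightarrow> ('a \<Rightarrow> 'b::real_normed_vector) \<Rightarrow> bool" where
  "rel_bounded DA A DC C \<longleftrightarrow> DA \<subseteq> DC \<and>
     (\<exists>\<alpha> \<beta>. \<alpha> \<ge> 0 \<and> \<beta> \<ge> 0 \<and> (\<forall>x\<in>DA. norm (C x) \<le> \<alpha> * norm x + \<beta> * norm (A x)))"

definition resolvent_op :: "'a::complex_vector set \<Rightarrow> ('a \<Rightarrow> 'a) \<Rightarrow> complex \<Rightarrow> 'a \<Rightarrow> 'a" where
  "resolvent_op Dom T lam = inv_into Dom (\<lambda>x. lam *\<^sub>C x - T x)"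

definition op_spectrum :: "'a::{complex_vector,real_normed_vector} set \<Rightarrow> ('a \<Rightarrow> 'a) \<Rightarrow> complex set" where
  "op_spectrum Dom T = {lam. \<not> (bij_betw (\<lambda>x. lam *\<^sub>C x - T x) Dom UNIV \<and>
                                 bounded_linear (resolvent_op Dom T lam))}"

definition op_matrix :: "('a \<Rightarrow> 'a::plus) \<Rightarrow> ('b \<Rightarrow> 'a) \<Rightarrow> ('a \<Rightarrow> 'b::plus) \<Rightarrow> ('b \<Rightarrow> 'b) \<Rightarrow> 'a \<times> 'b \<Rightarrow> 'a \<times> 'b" where
  "op_matrix A B C D = (\<lambda>(x1, x2). (A x1 + B x2, C x1 + D x2))"

definition R21 :: "'a::{complex_vector,real_normed_vector} set \<Rightarrow> ('a \<Rightarrow> 'a) \<Rightarrow> ('b \<Rightarrow> 'a) \<Rightarrow> ('a \<Rightarrow> 'b)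
    \<Rightarrow> 'b::{complex_vector,real_normed_vector} set \<Rightarrow> ('b \<Rightarrow> 'b) \<Rightarrow> complex \<Rightarrow> real" where
  "R21 DA A B C DD D lam = onorm (\<lambda>x. B (resolvent_op DD D lam (C (resolvent_op DA A lam x))))"

end

theory Submission
  imports Defs
begin

text \<open>
  For \<open>\<lambda>\<notin>\<sigma>(A)\<union>\<sigma>(D)\<close> set \<open>u = (\<lambda>-A)x\<^sub>1\<close>. Then \<open>(\<lambda>-\<A>)(x\<^sub>1,x\<^sub>2) = (y\<^sub>1,y\<^sub>2)\<close> is
  equivalent to \<open>x\<^sub>1 = (\<lambda>-A)\<^sup>-\<^sup>1u\<close>, \<open>x\<^sub>2 = (\<lambda>-D)\<^sup>-\<^sup>1(y\<^sub>2 + C(\<lambda>-A)\<^sup>-\<^sup>1u)\<close> and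
  \<open>(I - K)u = y\<^sub>1 + B(\<lambda>-D)\<^sup>-\<^sup>1y\<^sub>2\<close> with \<open>K = B(\<lambda>-D)\<^sup>-\<^sup>1C(\<lambda>-A)\<^sup>-\<^sup>1\<close>, which is bounded
  since \<open>B\<close> and \<open>C\<close> are relatively bounded. If \<open>\<parallel>K\<parallel> < 1\<close>, then \<open>I - K\<close> is onto by
  the contraction principle and \<open>(1 - \<parallel>K\<parallel>)\<parallel>u\<parallel> \<le> \<parallel>(I - K)u\<parallel>\<close>, so \<open>\<lambda>-\<A>\<close> is bijective with
  bounded inverse.
\<close>

lemma scaleC_zero_right [simp]: "c *\<^sub>C (0::'a::complex_vector) = 0"
proof -
  have "c *\<^sub>C (0::'a) = c *\<^sub>C (0 + 0)" by simp
  also have "\<dots> = c *\<^sub>C 0 + c *\<^sub>C 0" by (rule scaleC_add_right)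
  finally show ?thesis by simp
qed

lemma scaleC_minus_right: "c *\<^sub>C (- (x::'a::complex_vector)) = - (c *\<^sub>C x)"
proof -
  have "c *\<^sub>C x + c *\<^sub>C (- x) = c *\<^sub>C (x + - x)" by (rule scaleC_add_right[symmetric])
  also have "\<dots> = 0" by simp
  finally show ?thesis by (simp add: eq_neg_iff_add_eq_0 add.commute)
qed

lemma scaleC_diff_right: "c *\<^sub>C ((x::'a::complex_vector) - y) = c *\<^sub>C x - c *\<^sub>C y"
  by (simp only: diff_conv_add_uminus scaleC_add_right scaleC_minus_right)

lemma complex_subspace_diff:
  assumes "complex_subspace S" "x \<in> S" "y \<in> S"
  shows "x - y \<in> S"
proof -
  have "(-1::complex) *\<^sub>C y \<in> S" using assms unfolding complex_subspace_def by blast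
  moreover have "(-1::complex) *\<^sub>C y = - y" using scaleR_scaleC[of "-1" y] by simp
  ultimately have "x + - y \<in> S" using assms unfolding complex_subspace_def by auto
  then show ?thesis by simp
qed

lemma lin_op_shift:
  assumes "lin_op Dom T"
  shows "lin_op Dom (\<lambda>x. lam *\<^sub>C x - T x)"
proof -
  have add: "\<forall>x\<in>Dom. \<forall>y\<in>Dom. T (x + y) = T x + T y"
    and scale: "\<forall>c. \<forall>x\<in>Dom. T (c *\<^sub>C x) = c *\<^sub>C T x"
    using assms unfolding lin_op_def by blast+
  have "lam *\<^sub>C (c *\<^sub>C x) = c *\<^sub>C (lam *\<^sub>C x)" for c and x :: 'a
    by (simp only: scaleC_scaleC mult.commute)
  then show ?thesis
    using assms add scale unfolding lin_op_def by (simp add: scaleC_add_right scaleC_diff_right)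
qed

lemma inj_on_lin_op_if_bounded_below:
  assumes lin: "lin_op Dom S" and bound: "\<forall>w\<in>Dom. norm w \<le> M * norm (S w)"
  shows "inj_on S Dom"
proof (rule inj_onI)
  fix x z assume x: "x \<in> Dom" and z: "z \<in> Dom" and eq: "S x = S z"
  have diff: "x - z \<in> Dom" using lin x z unfolding lin_op_def by (blast intro: complex_subspace_diff)
  have "S (x - z + z) = S (x - z) + S z" using lin diff z unfolding lin_op_def by blast
  then have "S (x - z) = 0" using eq by simp
  then have "norm (x - z) \<le> 0" using bound diff by fastforce
  then show "x = z" by simp
qed

lemma bounded_linear_inv_into_lin_op:
  fixes S :: "'a::{complex_vector,real_normed_vector} \<Rightarrow> 'b::{complex_vector,real_normed_vector}"
  assumes lin: "lin_op Dom S" and bij: "bij_betw S Dom UNIV"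
    and bound: "\<forall>w\<in>Dom. norm w \<le> M * norm (S w)"
  shows "bounded_linear (inv_into Dom S)"
proof -
  let ?R = "inv_into Dom S"
  have inj: "inj_on S Dom" and img: "S ` Dom = UNIV" using bij unfolding bij_betw_def by blast+
  have R_in: "?R y \<in> Dom" and S_R: "S (?R y) = y" for y
    using img by (simp_all add: inv_into_into f_inv_into_f)
  have R_S: "?R (S x) = x" if "x \<in> Dom" for x using inj that by (rule inv_into_f_f)
  have add: "\<forall>x\<in>Dom. \<forall>y\<in>Dom. x + y \<in> Dom \<and> S (x + y) = S x + S y"
    and scale: "\<forall>c. \<forall>x\<in>Dom. c *\<^sub>C x \<in> Dom \<and> S (c *\<^sub>C x) = c *\<^sub>C S x"
    using lin unfolding lin_op_def complex_subspace_def by blast+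
  show ?thesis
  proof (rule bounded_linear_intro[where K = M])
    fix x y
    have sum: "?R x + ?R y \<in> Dom" "S (?R x + ?R y) = x + y" using add R_in S_R by simp_all
    show "?R (x + y) = ?R x + ?R y" using R_S[OF sum(1)] sum(2) by simp
  next
    fix r x
    have scaled: "complex_of_real r *\<^sub>C ?R x \<in> Dom" "S (complex_of_real r *\<^sub>C ?R x) = r *\<^sub>R x"
      using scale R_in S_R by (simp_all add: scaleR_scaleC)
    show "?R (r *\<^sub>R x) = r *\<^sub>R ?R x" using R_S[OF scaled(1)] scaled(2) by (simp add: scaleR_scaleC)
  next
    fix x
    have "norm (?R x) \<le> M * norm (S (?R x))" using bound R_in by blast
    then show "norm (?R x) \<le> norm x * M" using S_R by (simp add: mult.commute)
  qed
qed

lemma not_in_op_spectrumI: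
  assumes lin: "lin_op Dom T"
    and onto: "(\<lambda>x. lam *\<^sub>C x - T x) ` Dom = UNIV"
    and bound: "\<forall>w\<in>Dom. norm w \<le> M * norm (lam *\<^sub>C w - T w)"
  shows "lam \<notin> op_spectrum Dom T"
proof -
  have lin_shift: "lin_op Dom (\<lambda>x. lam *\<^sub>C x - T x)" using lin by (rule lin_op_shift)
  have "bij_betw (\<lambda>x. lam *\<^sub>C x - T x) Dom UNIV"
    using inj_on_lin_op_if_bounded_below[OF lin_shift bound] onto by (simp add: bij_betw_def)
  with bounded_linear_inv_into_lin_op[OF lin_shift _ bound] show ?thesis
    unfolding op_spectrum_def resolvent_op_def by blast
qed

lemma
  assumes "lam \<notin> op_spectrum Dom T"
  shows bounded_linear_resolvent_op: "bounded_linear (resolvent_op Dom T lam)"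
    and resolvent_op_in_domain: "resolvent_op Dom T lam y \<in> Dom"
    and shift_resolvent_op: "lam *\<^sub>C resolvent_op Dom T lam y - T (resolvent_op Dom T lam y) = y"
    and resolvent_op_shift: "x \<in> Dom \<Longrightarrow> resolvent_op Dom T lam (lam *\<^sub>C x - T x) = x"
proof -
  have bij: "bij_betw (\<lambda>x. lam *\<^sub>C x - T x) Dom UNIV"
    and "bounded_linear (resolvent_op Dom T lam)"
    using assms unfolding op_spectrum_def by auto
  then show "bounded_linear (resolvent_op Dom T lam)" by blast
  show "resolvent_op Dom T lam y \<in> Dom"
    "lam *\<^sub>C resolvent_op Dom T lam y - T (resolvent_op Dom T lam y) = y"
    "x \<in> Dom \<Longrightarrow> resolvent_op Dom T lam (lam *\<^sub>C x - T x) = x"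
    using bij unfolding resolvent_op_def bij_betw_def
    by (auto simp: inv_into_into f_inv_into_f[where f = "\<lambda>x. lam *\<^sub>C x - T x"] intro: inv_into_f_f)
qed

text \<open>\<open>C(\<lambda>-A)\<^sup>-\<^sup>1\<close> is bounded because \<open>A(\<lambda>-A)\<^sup>-\<^sup>1 = \<lambda>(\<lambda>-A)\<^sup>-\<^sup>1 - I\<close> is.\<close>

lemma bounded_linear_rel_bounded_resolvent:
  fixes C :: "'a::complex_normed_vector \<Rightarrow> 'b::complex_normed_vector"
  assumes lin: "lin_op DC C" and rel: "rel_bounded DA A DC C" and lam: "lam \<notin> op_spectrum DA A"
  shows "bounded_linear (\<lambda>y. C (resolvent_op DA A lam y))"
proof -
  let ?R = "resolvent_op DA A lam"
  obtain \<alpha> \<beta> where sub: "DA \<subseteq> DC" and \<alpha>: "\<alpha> \<ge> 0" and \<beta>: "\<beta> \<ge> 0"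
    and bound: "\<forall>x\<in>DA. norm (C x) \<le> \<alpha> * norm x + \<beta> * norm (A x)"
    using rel unfolding rel_bounded_def by blast
  have R: "bounded_linear ?R" and R_in: "?R y \<in> DC" for y
    using bounded_linear_resolvent_op[OF lam] resolvent_op_in_domain[OF lam] sub by blast+
  have add: "\<forall>x\<in>DC. \<forall>y\<in>DC. C (x + y) = C x + C y"
    and scale: "\<forall>c. \<forall>x\<in>DC. C (c *\<^sub>C x) = c *\<^sub>C C x"
    using lin unfolding lin_op_def by blast+
  let ?r = "onorm ?R"
  show ?thesis
  proof (rule bounded_linear_intro[where K = "\<alpha> * ?r + \<beta> * (cmod lam * ?r + 1)"])
    fix x y
    show "C (?R (x + y)) = C (?R x) + C (?R y)"
      using add R_in R by (simp add: linear_add bounded_linear.linear)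
  next
    fix r x
    have "C (?R (r *\<^sub>R x)) = C (complex_of_real r *\<^sub>C ?R x)"
      using linear_scale[OF bounded_linear.linear[OF R]] by (simp add: scaleR_scaleC)
    then show "C (?R (r *\<^sub>R x)) = r *\<^sub>R C (?R x)" using scale R_in by (simp add: scaleR_scaleC)
  next
    fix y
    have R_y: "norm (?R y) \<le> ?r * norm y" using onorm[OF R] .
    have "A (?R y) = lam *\<^sub>C ?R y - y" using shift_resolvent_op[OF lam, of y] by (simp add: algebra_simps)
    then have "norm (A (?R y)) \<le> cmod lam * norm (?R y) + norm y"
      using norm_triangle_ineq4[of "lam *\<^sub>C ?R y" y] by (simp add: norm_scaleC)
    also have "\<dots> \<le> cmod lam * (?r * norm y) + norm y" using R_y by (simp add: mult_left_mono)
    finally have "\<beta> * norm (A (?R y)) \<le> \<beta> * (cmod lam * (?r * norm y) + norm y)"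
      using \<beta> by (rule mult_left_mono)
    moreover have "\<alpha> * norm (?R y) \<le> \<alpha> * (?r * norm y)" using R_y \<alpha> by (rule mult_left_mono)
    moreover have "norm (C (?R y)) \<le> \<alpha> * norm (?R y) + \<beta> * norm (A (?R y))"
      using bound resolvent_op_in_domain[OF lam] by blast
    ultimately show "norm (C (?R y)) \<le> norm y * (\<alpha> * ?r + \<beta> * (cmod lam * ?r + 1))"
      by (simp add: algebra_simps)
  qed
qed

lemma bounded_linear_norm_le:
  assumes "bounded_linear f" and "norm x \<le> b"
  shows "norm (f x) \<le> onorm f * b"
  using onorm[OF assms(1), of x] mult_left_mono[OF assms(2) onorm_pos_le[OF assms(1)]] by simp

lemma contraction_shift_bounded_below:
  assumes "bounded_linear K"
  shows "(1 - onorm K) * norm u \<le> norm (u - K u)"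
  using norm_triangle_ineq2[of u "K u"] onorm[OF assms, of u] by (simp add: algebra_simps)

lemma contraction_shift_surj:
  fixes K :: "'a::banach \<Rightarrow> 'a"
  assumes K: "bounded_linear K" and small: "onorm K < 1"
  shows "\<exists>u. u - K u = f"
proof -
  have "dist (f + K u) (f + K v) \<le> onorm K * dist u v" for u v
    using onorm[OF K, of "u - v"] by (simp add: dist_norm linear_diff bounded_linear.linear[OF K])
  then obtain u where "f + K u = u"
    using banach_fix_type[OF onorm_pos_le[OF K] small, of "\<lambda>u. f + K u"] by blast
  then show ?thesis by (metis add_diff_cancel_right')
qed

lemma shift_op_matrix:
  "lam *\<^sub>C (x1, x2) - op_matrix A B C D (x1, x2)
     = ((lam *\<^sub>C x1 - A x1) - B x2, (lam *\<^sub>C x2 - D x2) - C x1)"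
  unfolding op_matrix_def by (simp add: scaleC_prod_def algebra_simps)

context
  fixes DA :: "'a::{complex_normed_vector,banach} set" and A :: "'a \<Rightarrow> 'a"
    and DD :: "'b::{complex_normed_vector,banach} set" and D :: "'b \<Rightarrow> 'b"
    and DB :: "'b set" and B :: "'b \<Rightarrow> 'a"
    and DC :: "'a set" and C :: "'a \<Rightarrow> 'b"
    and lam :: complex
  assumes B: "lin_op DB B" "rel_bounded DD D DB B"
    and C: "lin_op DC C" "rel_bounded DA A DC C"
    and lam_A: "lam \<notin> op_spectrum DA A" and lam_D: "lam \<notin> op_spectrum DD D"
begin

abbreviation "resolvent_coupling \<equiv> \<lambda>x. B (resolvent_op DD D lam (C (resolvent_op DA A lam x)))"

lemma bounded_linear_B_resolvent: "bounded_linear (\<lambda>y. B (resolvent_op DD D lam y))"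
  using bounded_linear_rel_bounded_resolvent[OF B lam_D] .

lemma bounded_linear_C_resolvent: "bounded_linear (\<lambda>y. C (resolvent_op DA A lam y))"
  using bounded_linear_rel_bounded_resolvent[OF C lam_A] .

lemma B_resolvent_add:
  "B (resolvent_op DD D lam (v + w)) = B (resolvent_op DD D lam v) + B (resolvent_op DD D lam w)"
  using linear_add[OF bounded_linear.linear[OF bounded_linear_B_resolvent]] by simp

lemma bounded_linear_resolvent_coupling: "bounded_linear resolvent_coupling"
  using bounded_linear_compose[OF bounded_linear_B_resolvent bounded_linear_C_resolvent] by simp

lemma onorm_resolvent_coupling: "onorm resolvent_coupling = R21 DA A B C DD D lam"
  unfolding R21_def ..

lemma op_matrix_shift_reduction:
  assumes "x1 \<in> DA" "x2 \<in> DD"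
    and y: "y = lam *\<^sub>C (x1, x2) - op_matrix A B C D (x1, x2)"
  defines "u \<equiv> lam *\<^sub>C x1 - A x1"
  shows "x1 = resolvent_op DA A lam u"
    and "x2 = resolvent_op DD D lam (snd y + C (resolvent_op DA A lam u))"
    and "u - resolvent_coupling u = fst y + B (resolvent_op DD D lam (snd y))"
proof -
  show x1: "x1 = resolvent_op DA A lam u"
    unfolding u_def using resolvent_op_shift[OF lam_A assms(1)] by simp
  have "lam *\<^sub>C x2 - D x2 = snd y + C (resolvent_op DA A lam u)"
    using y x1 by (simp add: shift_op_matrix)
  then show x2: "x2 = resolvent_op DD D lam (snd y + C (resolvent_op DA A lam u))"
    using resolvent_op_shift[OF lam_D assms(2)] by simp
  have "B x2 = B (resolvent_op DD D lam (snd y)) + resolvent_coupling u"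
    unfolding x2 by (rule B_resolvent_add)
  then show "u - resolvent_coupling u = fst y + B (resolvent_op DD D lam (snd y))"
    using y by (simp add: shift_op_matrix u_def)
qed

lemma op_matrix_shift_onto:
  assumes small: "R21 DA A B C DD D lam < 1"
  shows "(\<lambda>x. lam *\<^sub>C x - op_matrix A B C D x) ` (DA \<times> DD) = UNIV"
proof (intro set_eqI iffI)
  fix y :: "'a \<times> 'b"
  obtain u where u: "u - resolvent_coupling u = fst y + B (resolvent_op DD D lam (snd y))"
    using contraction_shift_surj[OF bounded_linear_resolvent_coupling] small
    unfolding onorm_resolvent_coupling by blast
  define x1 where "x1 = resolvent_op DA A lam u"
  define x2 where "x2 = resolvent_op DD D lam (snd y + C x1)"
  have "lam *\<^sub>C x1 - A x1 = u" "lam *\<^sub>C x2 - D x2 = snd y + C x1"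
    unfolding x1_def x2_def by (rule shift_resolvent_op[OF lam_A], rule shift_resolvent_op[OF lam_D])
  moreover have "B x2 = B (resolvent_op DD D lam (snd y)) + resolvent_coupling u"
    unfolding x2_def x1_def by (rule B_resolvent_add)
  ultimately have "lam *\<^sub>C (x1, x2) - op_matrix A B C D (x1, x2) = y"
    using u by (simp add: shift_op_matrix prod_eq_iff algebra_simps)
  moreover have "(x1, x2) \<in> DA \<times> DD"
    unfolding x1_def x2_def
    using resolvent_op_in_domain[OF lam_A] resolvent_op_in_domain[OF lam_D] by blast
  ultimately show "y \<in> (\<lambda>x. lam *\<^sub>C x - op_matrix A B C D x) ` (DA \<times> DD)" by force
qed simp

lemma op_matrix_shift_bounded_below:
  assumes small: "R21 DA A B C DD D lam < 1"
  shows "\<exists>M. \<forall>x\<in>DA \<times> DD. norm x \<le> M * norm (lam *\<^sub>C x - op_matrix A B C D x)"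
proof -
  let ?RA = "resolvent_op DA A lam" and ?RD = "resolvent_op DD D lam"
  let ?CR = "\<lambda>y. C (?RA y)" and ?BR = "\<lambda>y. B (?RD y)"
  define c where "c = (1 + onorm ?BR) / (1 - onorm resolvent_coupling)"
  define M where "M = onorm ?RA * c + onorm ?RD * (1 + onorm ?CR * c)"
  have k: "onorm resolvent_coupling < 1" using small onorm_resolvent_coupling by simp
  have "norm (x1, x2) \<le> M * norm (lam *\<^sub>C (x1, x2) - op_matrix A B C D (x1, x2))"
    if x: "x1 \<in> DA" "x2 \<in> DD" for x1 x2
  proof -
    define y where "y = lam *\<^sub>C (x1, x2) - op_matrix A B C D (x1, x2)"
    define u where "u = lam *\<^sub>C x1 - A x1"
    note reduction = op_matrix_shift_reduction[OF x y_def, folded u_def]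
    have y1: "norm (fst y) \<le> norm y" and y2: "norm (snd y) \<le> norm y"
      by (metis norm_fst_le prod.collapse, metis norm_snd_le prod.collapse)
    have "(1 - onorm resolvent_coupling) * norm u \<le> norm (fst y + ?BR (snd y))"
      using contraction_shift_bounded_below[OF bounded_linear_resolvent_coupling, of u] reduction(3) by simp
    also have "\<dots> \<le> norm y + onorm ?BR * norm y"
      using norm_triangle_ineq[of "fst y" "?BR (snd y)"] y1
        bounded_linear_norm_le[OF bounded_linear_B_resolvent y2] by linarith
    finally have u: "norm u \<le> c * norm y"
      unfolding c_def using k by (simp add: field_simps)
    have x1_bound: "norm x1 \<le> onorm ?RA * (c * norm y)"
      using bounded_linear_norm_le[OF bounded_linear_resolvent_op[OF lam_A] u] reduction(1) by simp
    have "norm (snd y + ?CR u) \<le> norm y + onorm ?CR * (c * norm y)"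
      using norm_triangle_ineq[of "snd y" "?CR u"] y2
        bounded_linear_norm_le[OF bounded_linear_C_resolvent u] by linarith
    then have x2_bound: "norm x2 \<le> onorm ?RD * (norm y + onorm ?CR * (c * norm y))"
      using bounded_linear_norm_le[OF bounded_linear_resolvent_op[OF lam_D]] reduction(2) by simp
    have "onorm ?RA * (c * norm y) + onorm ?RD * (norm y + onorm ?CR * (c * norm y)) = M * norm y"
      unfolding M_def by (simp add: algebra_simps)
    then show ?thesis
      using norm_Pair_le[of x1 x2] x1_bound x2_bound unfolding y_def by linarith
  qed
  then show ?thesis by blast
qed

end

theorem theorem1p1:
  fixes DA :: "'a::{complex_normed_vector,banach} set" and A :: "'a \<Rightarrow> 'a"
    and DD :: "'b::{complex_normed_vector,banach} set" and D :: "'b \<Rightarrow> 'b"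
    and DB :: "'b set" and B :: "'b \<Rightarrow> 'a"
    and DC :: "'a set" and C :: "'a \<Rightarrow> 'b"
  assumes "closed_op DA A" and "closed_op DD D"
    and "lin_op DB B" and "rel_bounded DD D DB B"
    and "lin_op DC C" and "rel_bounded DA A DC C"
    and "closed_op (DA \<times> DD) (op_matrix A B C D)"
  shows "op_spectrum (DA \<times> DD) (op_matrix A B C D) \<subseteq>
           op_spectrum DA A \<union> op_spectrum DD D \<union>
           {lam. lam \<notin> op_spectrum DA A \<union> op_spectrum DD D \<and> R21 DA A B C DD D lam \<ge> 1}"
proof (rule subsetI, rule ccontr)
  fix lam
  assume spec: "lam \<in> op_spectrum (DA \<times> DD) (op_matrix A B C D)"
    and "lam \<notin> op_spectrum DA A \<union> op_spectrum DD D \<union>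
           {lam. lam \<notin> op_spectrum DA A \<union> op_spectrum DD D \<and> R21 DA A B C DD D lam \<ge> 1}"
  then have lam_A: "lam \<notin> op_spectrum DA A" and lam_D: "lam \<notin> op_spectrum DD D"
    and small: "R21 DA A B C DD D lam < 1" by auto
  have lin: "lin_op (DA \<times> DD) (op_matrix A B C D)"
    using assms(7) unfolding closed_op_def by blast
  obtain M where "\<forall>x\<in>DA \<times> DD. norm x \<le> M * norm (lam *\<^sub>C x - op_matrix A B C D x)"
    using op_matrix_shift_bounded_below[OF assms(3-6) lam_A lam_D small] by blast
  with not_in_op_spectrumI[OF lin op_matrix_shift_onto[OF assms(3-6) lam_A lam_D small]]
  show False using spec by blast
qed

end
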